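(* Let $k\ge2$ and let $\mathcal X=\{x_1,\dots,x_{k+1}\}\subset\mathbb R^d$ be in general position with $c(\mathcal X)\in\sigma(\mathcal X)$. Suppose the facet $\hat{\mathcal X}_{\min}$ of $\mathcal X$ whose affine hull is closest to $c(\mathcal X)$ is unique. Then $c(\hat{\mathcal X}_{\min})\in\sigma(\hat{\mathcal X}_{\min})$.
   Context: For a set $\mathcal Y$ of $m+1$ affinely independent points in $\mathbb R^d$, $c(\mathcal Y)$ is the point equidistant from all points of $\mathcal Y$ that minimizes this common distance (equivalently, the circumcenter of $\mathcal Y$ within its affine hull), and $\sigma(\mathcal Y)$ is the open geometric $m$-simplex spanned by $\mathcal Y$ (its relative interior). The facets of $\mathcal X$ are the sets $\mathcal X\setminus\{x_i\}$; $\hat{\mathcal X}_{\min}$ is the facet minimizing the Euclidean distance from $c(\mathcal X)$ to its affine hull. *)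

theory Defs
  imports "HOL-Analysis.Analysis"
begin

text \<open>Circumcenter c(Y): the unique point of the affine hull of Y equidistant from all points of Y
  (well defined when Y is affinely independent).\<close>
definition circumcenter :: "'a::euclidean_space set \<Rightarrow> 'a" where
  "circumcenter Y = (THE c. c \<in> affine hull Y \<and> (\<forall>y\<in>Y. \<forall>z\<in>Y. dist c y = dist c z))"

definition open_simplex :: "'a::euclidean_space set \<Rightarrow> 'a set" where
  "open_simplex Y = rel_interior (convex hull Y)"

end

theory Submission
  imports Defs
begin

text \<open>Let c be the circumcenter of X and p its orthogonal projection onto the affine hull of
  the facet X - {x0}. By Pythagoras p is equidistant from that facet, so p is its circumcenter,
  and it remains to show that every barycentric coordinate of p is positive. Fix a vertex j of
  the facet, let G = X - {x0, j}, let q be the projection of c onto aff G, and let u and v be the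
  normals from aff G to j and to x0. Since c lies in the open simplex, c - q = mu_j u + mu_x0 v
  with mu_j, mu_x0 > 0. The squared distances from c to the facets opposite x0 and j are
  |c - q|^2 - (c - q).u^2 / |u|^2 and |c - q|^2 - (c - q).v^2 / |v|^2, so the hypothesis says
  that c - q has the larger component along u. For a positive combination of two independent
  vectors this forces (c - q).u > 0, and (c - q).u / |u|^2 is exactly the barycentric
  coordinate of p at j.\<close>

definition orthogonal_to_hull :: "'a::real_inner \<Rightarrow> 'a set \<Rightarrow> bool" where
  "orthogonal_to_hull v S \<longleftrightarrow> (\<forall>y\<in>affine hull S. \<forall>z\<in>affine hull S. orthogonal v (y - z))"

lemma orthogonal_to_hullD:
  "orthogonal_to_hull v S \<Longrightarrow> y \<in> affine hull S \<Longrightarrow> z \<in> affine hull S \<Longrightarrow> v \<bullet> (y - z) = 0"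
  unfolding orthogonal_to_hull_def orthogonal_def by blast

lemma orthogonal_to_hullI:
  fixes v :: "'a::real_inner"
  assumes "\<And>y. y \<in> S \<Longrightarrow> v \<bullet> y = b"
  shows "orthogonal_to_hull v S"
proof -
  have "affine hull S \<subseteq> {x. v \<bullet> x = b}"
    by (rule hull_minimal) (use assms affine_hyperplane in auto)
  then show ?thesis
    unfolding orthogonal_to_hull_def orthogonal_def by (auto simp: inner_diff_right)
qed

lemma orthogonal_to_hull_lincomb:
  "orthogonal_to_hull u S \<Longrightarrow> orthogonal_to_hull v S \<Longrightarrow> orthogonal_to_hull (a *\<^sub>R u + b *\<^sub>R v) S"
  unfolding orthogonal_to_hull_def orthogonal_def by (simp add: inner_add_left)

lemma orthogonal_to_hull_foot_exists:
  fixes x :: "'a::euclidean_space"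
  assumes "S \<noteq> {}"
  obtains p where "p \<in> affine hull S" "orthogonal_to_hull (x - p) S"
proof
  let ?A = "affine hull S"
  let ?p = "closest_point ?A x"
  have ne: "?A \<noteq> {}" using assms by simp
  show pA: "?p \<in> ?A" using closest_point_in_set[OF closed_affine_hull ne] .
  have closest: "\<forall>z\<in>?A. dist x ?p \<le> dist x z"
    using closest_point_exists(2)[OF closed_affine_hull ne] .
  have le: "(x - ?p) \<bullet> (y - ?p) \<le> 0" if "y \<in> ?A" for y
    using any_closest_point_dot[OF affine_imp_convex closed_affine_hull pA that closest] by simp
  \<comment> \<open>the reflection of y in the foot also lies in the hull\<close>
  have zero: "(x - ?p) \<bullet> (y - ?p) = 0" if y: "y \<in> ?A" for y
  proof -
    have "?p + 1 *\<^sub>R (?p - y) \<in> ?A"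
      using mem_affine_3_minus[OF affine_affine_hull pA pA y] .
    from le[OF this] le[OF y] show ?thesis by (simp add: inner_diff_right)
  qed
  show "orthogonal_to_hull (x - ?p) S"
    unfolding orthogonal_to_hull_def orthogonal_def
  proof (intro ballI)
    fix y z assume "y \<in> ?A" "z \<in> ?A"
    then show "(x - ?p) \<bullet> (y - z) = 0"
      using zero[of y] zero[of z] by (simp add: inner_diff_right)
  qed
qed

lemma orthogonal_to_hull_foot_unique:
  assumes "p \<in> affine hull S" "orthogonal_to_hull (x - p) S"
    and "p' \<in> affine hull S" "orthogonal_to_hull (x - p') S"
  shows "p = p'"
proof -
  have "(x - p) \<bullet> (p' - p) = 0" "(x - p') \<bullet> (p' - p) = 0"
    using orthogonal_to_hullD assms by blast+
  then have "(p' - p) \<bullet> (p' - p) = 0"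
    by (simp add: inner_diff_left inner_diff_right inner_commute)
  then show ?thesis by simp
qed

lemma dist_foot_Pythagorean:
  assumes "p \<in> affine hull S" "orthogonal_to_hull (x - p) S" "y \<in> affine hull S"
  shows "(dist x y)\<^sup>2 = (dist x p)\<^sup>2 + (dist p y)\<^sup>2"
proof -
  have "orthogonal (x - p) (p - y)"
    using orthogonal_to_hullD[OF assms(2,1,3)] by (simp add: orthogonal_def)
  from norm_add_Pythagorean[OF this] show ?thesis by (simp add: dist_norm)
qed

lemma infdist_affine_hull_foot:
  assumes "p \<in> affine hull S" "orthogonal_to_hull (x - p) S"
  shows "infdist x (affine hull S) = dist x p"
proof (rule antisym)
  show "infdist x (affine hull S) \<le> dist x p" by (rule infdist_le[OF assms(1)])
  have ne: "affine hull S \<noteq> {}" using assms(1) by auto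
  have "dist x p \<le> dist x y" if "y \<in> affine hull S" for y
    using dist_foot_Pythagorean[OF assms that] by (simp add: power2_le_imp_le)
  then show "dist x p \<le> infdist x (affine hull S)"
    unfolding infdist_notempty[OF ne] by (rule cINF_greatest[OF ne])
qed

lemma equidistant_in_hull_unique:
  fixes c1 c2 :: "'a::real_inner"
  assumes "c1 \<in> affine hull S" "\<forall>y\<in>S. \<forall>z\<in>S. dist c1 y = dist c1 z"
    and "c2 \<in> affine hull S" "\<forall>y\<in>S. \<forall>z\<in>S. dist c2 y = dist c2 z"
  shows "c1 = c2"
proof -
  have "S \<noteq> {}" using assms(1) by (metis affine_hull_empty empty_iff)
  then obtain y0 where y0: "y0 \<in> S" by blast
  have "(c1 - c2) \<bullet> y = (c1 - c2) \<bullet> y0" if y: "y \<in> S" for y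
  proof -
    have "(norm (c1 - y))\<^sup>2 = (norm (c1 - y0))\<^sup>2" "(norm (c2 - y))\<^sup>2 = (norm (c2 - y0))\<^sup>2"
      using assms(2,4) y y0 by (metis dist_norm)+
    then show ?thesis
      by (simp add: power2_norm_eq_inner inner_diff_left inner_diff_right inner_commute algebra_simps)
  qed
  then have "orthogonal_to_hull (c1 - c2) S" by (rule orthogonal_to_hullI)
  then have "(c1 - c2) \<bullet> (c1 - c2) = 0" using orthogonal_to_hullD assms(1,3) by blast
  then show ?thesis by simp
qed

lemma circumcenter_eqI:
  fixes c :: "'a::euclidean_space"
  assumes "c \<in> affine hull S" "\<forall>y\<in>S. \<forall>z\<in>S. dist c y = dist c z"
  shows "circumcenter S = c"
  unfolding circumcenter_def
proof (rule the_equality)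
  show "c \<in> affine hull S \<and> (\<forall>y\<in>S. \<forall>z\<in>S. dist c y = dist c z)" using assms by blast
next
  fix c' assume "c' \<in> affine hull S \<and> (\<forall>y\<in>S. \<forall>z\<in>S. dist c' y = dist c' z)"
  then show "c' = c" using equidistant_in_hull_unique[of c' S c] assms by blast
qed

lemma circumcenter_eq_foot:
  fixes c :: "'a::euclidean_space"
  assumes "\<forall>y\<in>S. \<forall>z\<in>S. dist c y = dist c z"
    and "p \<in> affine hull S" "orthogonal_to_hull (c - p) S"
  shows "circumcenter S = p"
proof (rule circumcenter_eqI[OF assms(2)], intro ballI)
  fix y z assume y: "y \<in> S" and z: "z \<in> S"
  have "(dist c y)\<^sup>2 = (dist c z)\<^sup>2" using assms(1) y z by metis
  then have "(dist p y)\<^sup>2 = (dist p z)\<^sup>2"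
    unfolding dist_foot_Pythagorean[OF assms(2,3) hull_inc[OF y]]
      dist_foot_Pythagorean[OF assms(2,3) hull_inc[OF z]] by simp
  then show "dist p y = dist p z" by (simp add: power2_eq_imp_eq)
qed

lemma equidistant_point_insert:
  fixes x :: "'a::real_inner"
  assumes cT: "cT \<in> affine hull T" "\<forall>y\<in>T. \<forall>z\<in>T. dist cT y = dist cT z"
    and y0: "y0 \<in> T"
    and p: "p \<in> affine hull T" "orthogonal_to_hull (x - p) T" "x \<noteq> p"
  shows "\<exists>c\<in>affine hull (insert x T). \<forall>y\<in>insert x T. \<forall>z\<in>insert x T. dist c y = dist c z"
proof -
  define N where "N = (norm (x - p))\<^sup>2"
  have N: "N > 0" using p(3) by (simp add: N_def)
  \<comment> \<open>t solves r^2 + t^2 N = |cT - p|^2 + (t - 1)^2 N, where r is the radius of T about cT\<close>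
  define t where "t = ((norm (cT - p))\<^sup>2 + N - (dist cT y0)\<^sup>2) / (2 * N)"
  define c where "c = cT + t *\<^sub>R (x - p)"
  define R where "R = (dist cT y0)\<^sup>2 + t\<^sup>2 * N"
  have "orthogonal_to_hull (c - cT) T"
    using orthogonal_to_hull_lincomb[OF p(2) p(2), of t 0] by (simp add: c_def)
  moreover have "(dist c cT)\<^sup>2 = t\<^sup>2 * N"
    by (simp add: c_def N_def dist_norm power_mult_distrib)
  ultimately have "(dist c y)\<^sup>2 = R" if "y \<in> T" for y
    using dist_foot_Pythagorean[OF cT(1) _ hull_inc[OF that]] cT(2)[rule_format, OF that y0]
    by (simp add: R_def)
  moreover have "(dist c x)\<^sup>2 = R"
  proof -
    have "orthogonal (cT - p) ((t - 1) *\<^sub>R (x - p))"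
      using orthogonal_to_hullD[OF p(2) cT(1) p(1)] by (simp add: orthogonal_def inner_commute)
    moreover have "c - x = (cT - p) + (t - 1) *\<^sub>R (x - p)"
      by (simp add: c_def algebra_simps)
    ultimately have "(dist c x)\<^sup>2 = (norm (cT - p))\<^sup>2 + (t - 1)\<^sup>2 * N"
      by (simp add: dist_norm norm_add_Pythagorean power_mult_distrib N_def)
    also have "\<dots> = R"
    proof -
      have "2 * N * t = (norm (cT - p))\<^sup>2 + N - (dist cT y0)\<^sup>2"
        using N by (simp add: t_def)
      then show ?thesis by (simp add: R_def power2_eq_square algebra_simps)
    qed
    finally show ?thesis .
  qed
  ultimately have "dist c y = dist c x" if "y \<in> insert x T" for y
    using that by (metis insert_iff power2_eq_imp_eq zero_le_dist)
  then have "\<forall>y\<in>insert x T. \<forall>z\<in>insert x T. dist c y = dist c z" by metis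
  moreover have "c \<in> affine hull (insert x T)"
    unfolding c_def using cT(1) p(1) hull_mono[of T "insert x T"]
    by (intro mem_affine_3_minus[OF affine_affine_hull]) (auto intro: hull_inc)
  ultimately show ?thesis by blast
qed

lemma equidistant_point_exists:
  fixes S :: "'a::euclidean_space set"
  assumes "finite S" "\<not> affine_dependent S" "S \<noteq> {}"
  shows "\<exists>c\<in>affine hull S. \<forall>y\<in>S. \<forall>z\<in>S. dist c y = dist c z"
  using assms
proof (induction S rule: finite_induct)
  case empty then show ?case by simp
next
  case (insert x T)
  show ?case
  proof (cases "T = {}")
    case True then show ?thesis by (auto intro: hull_inc)
  next
    case False
    have "\<not> affine_dependent T"
      using insert.prems(1) affine_dependent_subset[of T "insert x T"] by blast
    then obtain cT where cT: "cT \<in> affine hull T" "\<forall>y\<in>T. \<forall>z\<in>T. dist cT y = dist cT z"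
      using insert.IH False by blast
    obtain y0 where y0: "y0 \<in> T" using False by auto
    obtain p where p: "p \<in> affine hull T" "orthogonal_to_hull (x - p) T"
      using orthogonal_to_hull_foot_exists[OF False] by blast
    have "x \<notin> affine hull T"
      using insert.prems(1) insert.hyps(2) unfolding affine_dependent_def
      by (metis Diff_insert_absorb insertI1)
    with p(1) have "x \<noteq> p" by auto
    from equidistant_point_insert[OF cT y0 p this] show ?thesis .
  qed
qed

lemma affine_sum_mem:
  fixes f :: "'b \<Rightarrow> 'a::real_vector"
  assumes "affine A" "finite I" "sum w I = 1" "\<And>i. i \<in> I \<Longrightarrow> f i \<in> A"
  shows "(\<Sum>i\<in>I. w i *\<^sub>R f i) \<in> A"
proof -
  obtain i0 where i0: "i0 \<in> I" using assms(3) by fastforce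
  let ?a = "f i0"
  have sub: "subspace ((\<lambda>x. x - ?a) ` A)"
    using affine_diffs_subspace_subtract[OF assms(1) assms(4)[OF i0]] .
  have "(\<Sum>i\<in>I. w i *\<^sub>R (f i - ?a)) \<in> (\<lambda>x. x - ?a) ` A"
    by (intro subspace_sum[OF sub] subspace_scale[OF sub]) (use assms(4) in blast)
  moreover have "(\<Sum>i\<in>I. w i *\<^sub>R (f i - ?a)) = (\<Sum>i\<in>I. w i *\<^sub>R f i) - ?a"
    using assms(3) by (simp add: scaleR_diff_right sum_subtractf flip: scaleR_sum_left)
  ultimately show ?thesis by auto
qed

lemma affine_combination_shift_into_hull:
  fixes h :: "'a \<Rightarrow> 'a::real_vector"
  assumes "finite S" "T \<subseteq> S" "sum w S = 1" "\<And>x. x \<in> S - T \<Longrightarrow> h x \<in> affine hull T"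
  shows "(\<Sum>x\<in>S. w x *\<^sub>R x) - (\<Sum>x\<in>S - T. w x *\<^sub>R (x - h x)) \<in> affine hull T"
proof -
  let ?f = "\<lambda>x. if x \<in> T then x else h x"
  have "(\<Sum>x\<in>S. w x *\<^sub>R x) - (\<Sum>x\<in>S - T. w x *\<^sub>R (x - h x)) = (\<Sum>x\<in>S. w x *\<^sub>R ?f x)"
    using sum.subset_diff[OF assms(2,1), of "\<lambda>x. w x *\<^sub>R x"]
      sum.subset_diff[OF assms(2,1), of "\<lambda>x. w x *\<^sub>R ?f x"]
    by (simp add: scaleR_diff_right sum_subtractf)
  also have "\<dots> \<in> affine hull T"
    by (rule affine_sum_mem[OF affine_affine_hull assms(1,3)]) (auto intro: hull_inc assms(4))
  finally show ?thesis .
qed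

lemma foot_affine_hull_insert:
  fixes c n y q :: "'a::real_inner"
  assumes q: "q \<in> affine hull G" "orthogonal_to_hull (c - q) G"
    and n: "y - n \<in> affine hull G" "orthogonal_to_hull n G" "n \<noteq> 0"
  defines "p \<equiv> q + ((c - q) \<bullet> n / (n \<bullet> n)) *\<^sub>R n"
  shows "p \<in> affine hull (insert y G)" "orthogonal_to_hull (c - p) (insert y G)"
proof -
  have "affine hull G \<subseteq> affine hull (insert y G)" by (rule hull_mono) blast
  then show "p \<in> affine hull (insert y G)"
    using mem_affine_3_minus[OF affine_affine_hull, of q "insert y G" y "y - n"] q(1) n(1)
    by (auto simp: p_def hull_inc)
  have cp: "c - p = (c - q) - ((c - q) \<bullet> n / (n \<bullet> n)) *\<^sub>R n"
    by (simp add: p_def)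
  have onG: "(c - p) \<bullet> (z - q) = 0" if "z \<in> affine hull G" for z
    using orthogonal_to_hullD[OF q(2) that q(1)] orthogonal_to_hullD[OF n(2) that q(1)]
    unfolding cp by (simp add: inner_diff_left)
  have onn: "(c - p) \<bullet> n = 0"
    using n(3) unfolding cp by (simp add: inner_diff_left)
  show "orthogonal_to_hull (c - p) (insert y G)"
  proof (rule orthogonal_to_hullI[where b = "(c - p) \<bullet> q"])
    fix z assume "z \<in> insert y G"
    moreover have "(c - p) \<bullet> (y - q) = (c - p) \<bullet> n + (c - p) \<bullet> ((y - n) - q)"
      by (simp add: inner_diff_right)
    ultimately have "(c - p) \<bullet> (z - q) = 0"
      using onn onG[OF n(1)] onG[OF hull_inc] by auto
    then show "(c - p) \<bullet> z = (c - p) \<bullet> q" by (simp add: inner_diff_right)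
  qed
qed

lemma infdist_affine_hull_insert:
  fixes c n y q :: "'a::real_inner"
  assumes q: "q \<in> affine hull G" "orthogonal_to_hull (c - q) G"
    and n: "y - n \<in> affine hull G" "orthogonal_to_hull n G" "n \<noteq> 0"
  shows "(infdist c (affine hull (insert y G)))\<^sup>2 = (norm (c - q))\<^sup>2 - ((c - q) \<bullet> n)\<^sup>2 / (n \<bullet> n)"
proof -
  define p where "p = q + ((c - q) \<bullet> n / (n \<bullet> n)) *\<^sub>R n"
  note foot = foot_affine_hull_insert[OF q n, folded p_def]
  have "q \<in> affine hull (insert y G)" using q(1) hull_mono[of G "insert y G"] by blast
  from dist_foot_Pythagorean[OF foot this]
  have "(dist c q)\<^sup>2 = (infdist c (affine hull (insert y G)))\<^sup>2 + (dist p q)\<^sup>2"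
    by (simp add: infdist_affine_hull_foot[OF foot])
  moreover have "(dist p q)\<^sup>2 = ((c - q) \<bullet> n)\<^sup>2 / (n \<bullet> n)"
    using n(3) by (simp add: p_def dist_norm power_mult_distrib power_divide
        flip: power2_norm_eq_inner) (simp add: divide_simps power2_eq_square power4_eq_xxxx)
  ultimately show ?thesis by (simp add: dist_norm)
qed

lemma orthogonal_to_hull_coefficient_unique:
  assumes "g \<in> affine hull G" "g' \<in> affine hull G" "orthogonal_to_hull n G" "n \<noteq> 0"
    and "g + s *\<^sub>R n = g' + t *\<^sub>R n"
  shows "s = t"
proof -
  have "g - g' = (t - s) *\<^sub>R n" using assms(5) by (simp add: algebra_simps)
  moreover have "n \<bullet> (g - g') = 0" using orthogonal_to_hullD assms(1-3) by blast
  ultimately show ?thesis using assms(4) by simp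
qed

lemma cone_combination_inner_pos_real:
  fixes a b N0 Nj P :: real
  assumes a: "a > 0" and b: "b > 0" and N0: "N0 > 0" and Nj: "Nj > 0" and CS: "P\<^sup>2 < N0 * Nj"
    and dom: "(a * P + b * Nj)\<^sup>2 / Nj < (a * N0 + b * P)\<^sup>2 / N0"
  shows "a * N0 + b * P > 0"
proof (rule ccontr)
  have "(a * P + b * Nj)\<^sup>2 * N0 < (a * N0 + b * P)\<^sup>2 * Nj"
    using dom N0 Nj by (simp add: field_simps)
  moreover have "(a * N0 + b * P)\<^sup>2 * Nj - (a * P + b * Nj)\<^sup>2 * N0
      = (N0 * Nj - P\<^sup>2) * (a\<^sup>2 * N0 - b\<^sup>2 * Nj)"
    by (simp add: power2_eq_square algebra_simps)
  ultimately have "(N0 * Nj - P\<^sup>2) * (a\<^sup>2 * N0 - b\<^sup>2 * Nj) > 0" by linarith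
  then have ab: "b\<^sup>2 * Nj < a\<^sup>2 * N0"
    using CS by (simp add: zero_less_mult_iff)
  assume "\<not> a * N0 + b * P > 0"
  then have "\<bar>a * N0\<bar> \<le> \<bar>b * P\<bar>" using a b N0 by auto
  then have "(a * N0)\<^sup>2 \<le> (b * P)\<^sup>2" by (simp add: abs_le_square_iff)
  also have "\<dots> < b\<^sup>2 * (N0 * Nj)" using CS b by (simp add: power_mult_distrib)
  finally have "a\<^sup>2 * N0 * N0 < b\<^sup>2 * Nj * N0" by (simp add: power2_eq_square algebra_simps)
  then show False using ab N0 by simp
qed

lemma cone_combination_inner_pos:
  fixes u v :: "'a::real_inner"
  assumes a: "a > 0" and b: "b > 0" and v: "v \<noteq> 0" and indep: "\<And>r. u \<noteq> r *\<^sub>R v"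
    and dom: "((a *\<^sub>R u + b *\<^sub>R v) \<bullet> v)\<^sup>2 / (v \<bullet> v) < ((a *\<^sub>R u + b *\<^sub>R v) \<bullet> u)\<^sup>2 / (u \<bullet> u)"
  shows "(a *\<^sub>R u + b *\<^sub>R v) \<bullet> u > 0"
proof -
  have Nu: "u \<bullet> u > 0" using indep[of 0] by simp
  have Nv: "v \<bullet> v > 0" using v by simp
  define r where "r = (u \<bullet> v) / (v \<bullet> v)"
  have "0 < (u - r *\<^sub>R v) \<bullet> (u - r *\<^sub>R v)" using indep[of r] by simp
  also have "\<dots> = u \<bullet> u - (u \<bullet> v)\<^sup>2 / (v \<bullet> v)"
    using Nv by (simp add: r_def inner_diff_left inner_diff_right inner_commute power2_eq_square
        field_simps)
  finally have "(u \<bullet> v)\<^sup>2 < (u \<bullet> u) * (v \<bullet> v)" using Nv by (simp add: field_simps)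
  moreover have "(a *\<^sub>R u + b *\<^sub>R v) \<bullet> u = a * (u \<bullet> u) + b * (u \<bullet> v)"
    "(a *\<^sub>R u + b *\<^sub>R v) \<bullet> v = a * (u \<bullet> v) + b * (v \<bullet> v)"
    by (simp_all add: inner_add_left inner_commute[of v u])
  ultimately show ?thesis using cone_combination_inner_pos_real[OF a b Nu Nv] dom by simp
qed

lemma affine_combination_minus_foot:
  fixes X :: "'a::real_inner set"
  assumes fin: "finite X" and x0: "x0 \<in> X" and j: "j \<in> X" "j \<noteq> x0" and mu: "sum mu X = 1"
    and q: "q \<in> affine hull (X - {x0, j})"
      "orthogonal_to_hull ((\<Sum>x\<in>X. mu x *\<^sub>R x) - q) (X - {x0, j})"
    and u: "j - u \<in> affine hull (X - {x0, j})" "orthogonal_to_hull u (X - {x0, j})"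
    and v: "x0 - v \<in> affine hull (X - {x0, j})" "orthogonal_to_hull v (X - {x0, j})"
  shows "(\<Sum>x\<in>X. mu x *\<^sub>R x) - q = mu j *\<^sub>R u + mu x0 *\<^sub>R v"
proof -
  let ?c = "\<Sum>x\<in>X. mu x *\<^sub>R x"
  let ?G = "X - {x0, j}"
  have XG: "X - ?G = {x0, j}" using x0 j by auto
  have "?c - (mu j *\<^sub>R u + mu x0 *\<^sub>R v)
      = ?c - (\<Sum>x\<in>X - ?G. mu x *\<^sub>R (x - (if x = j then j - u else x0 - v)))"
    using j(2) by (simp add: XG)
  also have "\<dots> \<in> affine hull ?G"
    by (rule affine_combination_shift_into_hull[OF fin _ mu]) (use u(1) v(1) XG in auto)
  finally have "?c - (mu j *\<^sub>R u + mu x0 *\<^sub>R v) \<in> affine hull ?G" .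
  moreover have "orthogonal_to_hull (?c - (?c - (mu j *\<^sub>R u + mu x0 *\<^sub>R v))) ?G"
    using orthogonal_to_hull_lincomb[OF u(2) v(2), of "mu j" "mu x0"] by (simp add: add.commute)
  ultimately show ?thesis
    using orthogonal_to_hull_foot_unique[OF q] by fastforce
qed

lemma foot_coefficient_along_normal:
  fixes c :: "'a::real_inner"
  assumes fin: "finite G" and j: "j \<notin> G"
    and q: "q \<in> affine hull G" "orthogonal_to_hull (c - q) G"
    and u: "j - u \<in> affine hull G" "orthogonal_to_hull u G" "u \<noteq> 0"
    and lam: "sum lam (insert j G) = 1"
      "orthogonal_to_hull (c - (\<Sum>x\<in>insert j G. lam x *\<^sub>R x)) (insert j G)"
  shows "lam j = (c - q) \<bullet> u / (u \<bullet> u)"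
proof -
  let ?p = "\<Sum>x\<in>insert j G. lam x *\<^sub>R x"
  have "?p \<in> affine hull (insert j G)"
    using lam(1) fin by (auto simp: affine_hull_finite)
  from orthogonal_to_hull_foot_unique[OF this lam(2) foot_affine_hull_insert[OF q u]]
  have p_eq: "?p = q + ((c - q) \<bullet> u / (u \<bullet> u)) *\<^sub>R u" .
  have "insert j G - G = {j}" using j by auto
  then have "?p - lam j *\<^sub>R u = ?p - (\<Sum>x\<in>insert j G - G. lam x *\<^sub>R (x - (j - u)))"
    by simp
  also have "\<dots> \<in> affine hull G"
    by (rule affine_combination_shift_into_hull[OF _ _ lam(1)]) (use fin u(1) j in auto)
  finally have "?p - lam j *\<^sub>R u \<in> affine hull G" .
  then show ?thesis
    using orthogonal_to_hull_coefficient_unique[OF _ q(1) u(2,3), of "?p - lam j *\<^sub>R u"] p_eq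
    by simp
qed

lemma facet_foot_coordinate_pos:
  fixes X :: "'a::euclidean_space set"
  assumes fin: "finite X" and ind: "\<not> affine_dependent X"
    and x0: "x0 \<in> X" and j: "j \<in> X" "j \<noteq> x0" and G_ne: "X - {x0, j} \<noteq> {}"
    and mu: "\<forall>x\<in>X. 0 < mu x" "sum mu X = 1" "(\<Sum>x\<in>X. mu x *\<^sub>R x) = c"
    and p: "p \<in> affine hull (X - {x0})" "orthogonal_to_hull (c - p) (X - {x0})"
    and lam: "sum lam (X - {x0}) = 1" "(\<Sum>x\<in>X - {x0}. lam x *\<^sub>R x) = p"
    and closer: "infdist c (affine hull (X - {x0})) < infdist c (affine hull (X - {j}))"
  shows "lam j > 0"
proof -
  define G where "G = X - {x0, j}"
  have F: "X - {x0} = insert j G" and Fj: "X - {j} = insert x0 G" and "j \<notin> G"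
    using x0 j by (auto simp: G_def)
  from G_ne have "G \<noteq> {}" by (simp add: G_def)
  note foot_exists = orthogonal_to_hull_foot_exists[OF this]
  obtain q where q: "q \<in> affine hull G" "orthogonal_to_hull (c - q) G" by (rule foot_exists)
  obtain hj where hj: "hj \<in> affine hull G" "orthogonal_to_hull (j - hj) G" by (rule foot_exists)
  obtain h0 where h0: "h0 \<in> affine hull G" "orthogonal_to_hull (x0 - h0) G" by (rule foot_exists)
  define u where "u = j - hj"
  define v where "v = x0 - h0"
  have u: "j - u \<in> affine hull G" "orthogonal_to_hull u G" using hj by (simp_all add: u_def)
  have v: "x0 - v \<in> affine hull G" "orthogonal_to_hull v G" using h0 by (simp_all add: v_def)
  have j_out: "j \<notin> affine hull (insert x0 G)" and x0_out: "x0 \<notin> affine hull (insert j G)"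
    using ind j x0 unfolding affine_dependent_def F[symmetric] Fj[symmetric] by blast+
  have GF: "affine hull G \<subseteq> affine hull (insert y G)" for y by (simp add: hull_mono subset_insertI)
  have "u \<noteq> 0" using j_out hj(1) GF by (auto simp: u_def)
  have "v \<noteq> 0" using x0_out h0(1) GF by (auto simp: v_def)
  have indep: "u \<noteq> r *\<^sub>R v" for r
  proof
    assume "u = r *\<^sub>R v"
    then have "j = hj + r *\<^sub>R (x0 - h0)" by (simp add: u_def v_def algebra_simps)
    moreover have "hj + r *\<^sub>R (x0 - h0) \<in> affine hull (insert x0 G)"
      using hj(1) h0(1) GF by (intro mem_affine_3_minus[OF affine_affine_hull]) (auto intro: hull_inc)
    ultimately show False using j_out by simp
  qed
  have cq: "c - q = mu j *\<^sub>R u + mu x0 *\<^sub>R v"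
    using affine_combination_minus_foot[OF fin x0 j mu(2)] q u v mu(3) by (simp add: G_def)
  have "(infdist c (affine hull (X - {x0})))\<^sup>2 < (infdist c (affine hull (X - {j})))\<^sup>2"
    using closer infdist_nonneg by (intro power_strict_mono) auto
  then have "((c - q) \<bullet> v)\<^sup>2 / (v \<bullet> v) < ((c - q) \<bullet> u)\<^sup>2 / (u \<bullet> u)"
    unfolding F Fj infdist_affine_hull_insert[OF q u \<open>u \<noteq> 0\<close>]
      infdist_affine_hull_insert[OF q v \<open>v \<noteq> 0\<close>] by simp
  then have "(c - q) \<bullet> u > 0"
    unfolding cq using mu(1) x0 j \<open>v \<noteq> 0\<close> indep by (intro cone_combination_inner_pos) auto
  moreover have "lam j = (c - q) \<bullet> u / (u \<bullet> u)"
    using fin \<open>j \<notin> G\<close> q u \<open>u \<noteq> 0\<close> lam p(2) unfolding F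
    by (intro foot_coefficient_along_normal) (auto simp: G_def)
  ultimately show ?thesis using \<open>u \<noteq> 0\<close> by simp
qed

theorem mainTheorem17:
  fixes X :: "'a::euclidean_space set" and k :: nat and x0 :: 'a
  assumes "k \<ge> 2"
    and "finite X" and "card X = k + 1"
    and "\<not> affine_dependent X"
    and "circumcenter X \<in> open_simplex X"
    and "x0 \<in> X"
    and "\<forall>x\<in>X. x \<noteq> x0 \<longrightarrow>
           infdist (circumcenter X) (affine hull (X - {x0}))
             < infdist (circumcenter X) (affine hull (X - {x}))"
  shows "circumcenter (X - {x0}) \<in> open_simplex (X - {x0})"
proof -
  note fin = assms(2) and ind = assms(4) and x0 = assms(6)
  obtain c where c: "c \<in> affine hull X" "\<forall>y\<in>X. \<forall>z\<in>X. dist c y = dist c z"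
    using equidistant_point_exists[OF fin ind] x0 by blast
  have cX: "circumcenter X = c" by (rule circumcenter_eqI[OF c])
  obtain mu where mu: "\<forall>x\<in>X. 0 < mu x" "sum mu X = 1" "(\<Sum>x\<in>X. mu x *\<^sub>R x) = c"
    using assms(5) unfolding cX open_simplex_def rel_interior_convex_hull_explicit[OF ind] by blast
  have G_ne: "X - {x0, j} \<noteq> {}" for j
  proof
    assume "X - {x0, j} = {}"
    then have "card X \<le> card {x0, j}" by (intro card_mono) auto
    also have "\<dots> \<le> 2" by (simp add: card_insert_if)
    finally show False using assms(1,3) by simp
  qed
  then have "X - {x0} \<noteq> {}" by blast
  then obtain p where p: "p \<in> affine hull (X - {x0})" "orthogonal_to_hull (c - p) (X - {x0})"
    by (rule orthogonal_to_hull_foot_exists)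
  have "circumcenter (X - {x0}) = p"
    using c(2) by (intro circumcenter_eq_foot[OF _ p]) blast
  moreover obtain lam where lam: "sum lam (X - {x0}) = 1" "(\<Sum>x\<in>X - {x0}. lam x *\<^sub>R x) = p"
    using p(1) affine_hull_finite[of "X - {x0}"] fin by auto
  moreover have "\<forall>j\<in>X - {x0}. lam j > 0"
    using assms(7) facet_foot_coordinate_pos[OF fin ind x0 _ _ G_ne mu p lam] by (simp add: cX)
  moreover have "\<not> affine_dependent (X - {x0})"
    using ind affine_dependent_subset by blast
  ultimately show ?thesis
    unfolding open_simplex_def by (auto simp: rel_interior_convex_hull_explicit)
qed

end
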